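(* Under the standing assumptions described in the context (including (H4)–(H8)), the predictor–corrector method is consistent: for every partition satisfying (H4) with step $h$, $$\max_{0\le n\le N}\frac{|\tau_{n+1}|}{h}\le \tfrac12H^2h+\tfrac12K_2H^3h^2,$$ and consequently $\max_{0\le n\le N}|\tau_{n+1}|/h\to0$ as $h\to0$ (along partitions satisfying (H4) with the same constants $H,K_2$).
   Context: Let $T>0$ and let $g:[0,T]\to[0,\infty)$ be increasing, left-continuous, continuous at $0$, with a finite set $D_g\subset(0,T)$ of discontinuity points; $\Delta^+\varphi(t)=\varphi(t^+)-\varphi(t)$; $g^B(t)=\sum_{s\in[0,t)}\Delta^+g(s)$, $g^C=g-g^B$; $\mu_g$ is the Lebesgue–Stieltjes measure with $\mu_g([c,d))=g(d)-g(c)$. For $u:[0,T]\to\mathbb R$ the Stieltjes derivative at $t$ is $u'_g(t)=\lim_{s\to t}\frac{u(s)-u(t)}{g(s)-g(t)}$ if $t\notin D_g$ and $u'_g(t)=\frac{u(t^+)-u(t)}{\Delta^+g(t)}$ if $t\in D_g$. Let $f:[0,T]\times\mathbb R\to\mathbb R$, $x_0\in\mathbb R$, and let $x$ be the solution of $x'_g(t)=f(t,x(t))$ for $\mu_g$-a.e. $t\in[0,T)$, $x(0)=x_0$; it satisfies $x(t)=x_0+\int_{[0,t)}f(s,x(s))\,\mathrm d\mu_g(s)$ for all $t\in[0,T]$. Put $f_*(x)(t)=f(t,x(t))$, $f_*^B(x)(t)=\sum_{s\in[0,t)}\Delta^+f_*(x)(s)$, $f_*^C(x)=f_*(x)-f_*^B(x)$.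 A function $u$ is $g$-Lipschitz with constant $H$ if $|u(t)-u(s)|\le H|g(t)-g(s)|$ for all $t,s$; $g$-continuous means: for every $t_0$ and $\epsilon>0$ there is $\delta>0$ with $|g(t)-g(t_0)|<\delta\Rightarrow|u(t)-u(t_0)|<\epsilon$. Hypotheses: (H4) $0=t_0<t_1<\dots<t_{N+1}=T$ with $t_{k+1}-t_k=h>0$ for all $k$, and $D_g\subset\{t_k\}$; $K_1=\max\{\Delta^+g(d):d\in D_g\}$. (H5) $f_*(x)$ is $g$-Lipschitz with constant $H>0$, and $f_*^C(x)$ and $g^C$ are Lipschitz with constant $H$. (H6) for every $c\in\mathbb R$, $f(\cdot,c)$ is bounded and $g$-continuous on $[0,T]$. (H7) for every $t$, $f(t,\cdot)\in C^1(\mathbb R)$ and $|\partial_x f(t,x)|<K_2$ for all $(t,x)$. (H8) for every $t\in[0,T)$ and $c$, the right limit $f(t^+,c)=\lim_{s\to t^+}f(s,c)$ exists, $f(t^+,\cdot)\in C^1(\mathbb R)$ and $|\partial_x f(t^+,x)|<K_3$ for all $(t,x)$. Notation: $x_k=x(t_k)$, $x_k^+=x(t_k^+)$. For $k=0,\dots,N$: $x^*_{k+1}=x_k^++f(t_k^+,x_k^+)(g(t_{k+1})-g(t_k^+))$ and $\tau_{k+1}=x_{k+1}-x_k^+-\tfrac12(f(t_k^+,x_k^+)+f(t_{k+1},x^*_{k+1}))(g(t_{k+1})-g(t_k^+))$. *)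

theory Defs
  imports "HOL-Analysis.Analysis"
begin

definition rlim :: "(real \<Rightarrow> real) \<Rightarrow> real \<Rightarrow> real" where
  "rlim \<phi> t = Lim (at_right t) \<phi>"

definition djump :: "(real \<Rightarrow> real) \<Rightarrow> real \<Rightarrow> real" where
  "djump \<phi> t = rlim \<phi> t - \<phi> t"

definition Dg :: "(real \<Rightarrow> real) \<Rightarrow> real \<Rightarrow> real set" where
  "Dg g T = {t \<in> {0..T}. \<not> continuous (at t within {0..T}) g}"

definition jump_part :: "(real \<Rightarrow> real) \<Rightarrow> real \<Rightarrow> real" where
  "jump_part \<phi> t = infsum (\<lambda>s. djump \<phi> s) {0..<t}"

definition cont_part :: "(real \<Rightarrow> real) \<Rightarrow> real \<Rightarrow> real" where
  "cont_part \<phi> t = \<phi> t - jump_part \<phi> t"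

(* Lebesgue-Stieltjes measure mu_g of the left-continuous nondecreasing g on [0,T],
   with mu_g([c,d)) = g d - g c.  g is extended constantly outside [0,T];
   mu_g is obtained by reflecting the (right-continuous) interval measure of
   s |-> - g(-s). *)
definition g_ext :: "(real \<Rightarrow> real) \<Rightarrow> real \<Rightarrow> real \<Rightarrow> real" where
  "g_ext g T t = g (max 0 (min T t))"

definition mu_g :: "(real \<Rightarrow> real) \<Rightarrow> real \<Rightarrow> real measure" where
  "mu_g g T = distr (interval_measure (\<lambda>s. - g_ext g T (- s))) borel uminus"

definition has_g_deriv :: "(real \<Rightarrow> real) \<Rightarrow> (real \<Rightarrow> real) \<Rightarrow> real \<Rightarrow> real \<Rightarrow> real \<Rightarrow> bool" where
  "has_g_deriv u g T t l \<longleftrightarrow>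
     (if t \<in> Dg g T
      then (\<exists>L. (u \<longlongrightarrow> L) (at_right t)) \<and> l = djump u t / djump g t
      else ((\<lambda>s. (u s - u t) / (g s - g t)) \<longlongrightarrow> l)
             (at t within {s \<in> {0..T}. g s \<noteq> g t}))"

definition g_lipschitz_on :: "real set \<Rightarrow> (real \<Rightarrow> real) \<Rightarrow> real \<Rightarrow> (real \<Rightarrow> real) \<Rightarrow> bool" where
  "g_lipschitz_on S g H u \<longleftrightarrow> (\<forall>t\<in>S. \<forall>s\<in>S. \<bar>u t - u s\<bar> \<le> H * \<bar>g t - g s\<bar>)"

definition lipschitz_const_on :: "real set \<Rightarrow> real \<Rightarrow> (real \<Rightarrow> real) \<Rightarrow> bool" where
  "lipschitz_const_on S H u \<longleftrightarrow> (\<forall>t\<in>S. \<forall>s\<in>S. \<bar>u t - u s\<bar> \<le> H * \<bar>t - s\<bar>)"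

definition g_continuous_on :: "real set \<Rightarrow> (real \<Rightarrow> real) \<Rightarrow> (real \<Rightarrow> real) \<Rightarrow> bool" where
  "g_continuous_on S g u \<longleftrightarrow>
     (\<forall>t0\<in>S. \<forall>\<epsilon>>0. \<exists>\<delta>>0. \<forall>t\<in>S. \<bar>g t - g t0\<bar> < \<delta> \<longrightarrow> \<bar>u t - u t0\<bar> < \<epsilon>)"

definition fplus :: "(real \<Rightarrow> real \<Rightarrow> real) \<Rightarrow> real \<Rightarrow> real \<Rightarrow> real" where
  "fplus f t c = rlim (\<lambda>s. f s c) t"

definition pc_h :: "real \<Rightarrow> nat \<Rightarrow> real" where
  "pc_h T N = T / real (Suc N)"

definition pc_t :: "real \<Rightarrow> nat \<Rightarrow> nat \<Rightarrow> real" where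
  "pc_t T N k = real k * pc_h T N"

definition pc_xstar :: "(real \<Rightarrow> real) \<Rightarrow> (real \<Rightarrow> real \<Rightarrow> real) \<Rightarrow> (real \<Rightarrow> real) \<Rightarrow> real \<Rightarrow> nat \<Rightarrow> nat \<Rightarrow> real" where
  "pc_xstar g f x T N k =
     rlim x (pc_t T N k)
     + fplus f (pc_t T N k) (rlim x (pc_t T N k)) * (g (pc_t T N (Suc k)) - rlim g (pc_t T N k))"

definition pc_tau :: "(real \<Rightarrow> real) \<Rightarrow> (real \<Rightarrow> real \<Rightarrow> real) \<Rightarrow> (real \<Rightarrow> real) \<Rightarrow> real \<Rightarrow> nat \<Rightarrow> nat \<Rightarrow> real" where
  "pc_tau g f x T N j =
     (let k = j - 1 in
      x (pc_t T N (Suc k)) - rlim x (pc_t T N k)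
      - (1/2) * (fplus f (pc_t T N k) (rlim x (pc_t T N k))
                 + f (pc_t T N (Suc k)) (pc_xstar g f x T N k))
              * (g (pc_t T N (Suc k)) - rlim g (pc_t T N k)))"

end

theory Submission
  imports Defs
begin

text \<open>
  On a step [t_k, t_(k+1)] of length h the open interval contains no jump of g, so by (H5) both g
  and F = f(., x(.)) are H-Lipschitz on (t_k, t_(k+1)]. Hence the mu_g-mass
  Delta = g(t_(k+1)) - g(t_k^+) of (t_k, t_(k+1)) is at most H h, and x_(k+1) - x_k^+ is the
  mu_g-integral of F over that interval. There F differs from the trapezoid value
  (F(t_k^+) + F(t_(k+1)))/2 by at most H h/2 and from F(t_k^+) = f(t_k^+, x_k^+) by at most H h.
  The first bound makes the trapezoid rule exact up to H h Delta/2; the second shows that the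
  predictor misses x_(k+1) by at most H h Delta, which the K_2-Lipschitz continuity of
  f(t_(k+1), .) turns into a corrector error of at most K_2 H h Delta^2/2.
\<close>

lemma sets_mu_g [simp, measurable_cong]: "sets (mu_g g T) = sets borel"
  by (simp add: mu_g_def)

lemma space_mu_g [simp]: "space (mu_g g T) = UNIV"
  by (simp add: mu_g_def)

lemma g_ext_mono:
  assumes "mono_on {0..T} g" "0 \<le> T" "u \<le> v"
  shows "g_ext g T u \<le> g_ext g T v"
  unfolding g_ext_def using assms by (intro mono_onD[OF assms(1)]) auto

lemma g_ext_continuous_at_left:
  assumes "\<forall>t\<in>{0<..T}. continuous (at_left t) g"
  shows "continuous (at_left u) (g_ext g T)"
proof -
  consider "u \<le> 0" | "0 < u" "u \<le> T" | "T < u" by linarith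
  then show ?thesis
  proof cases
    case 1
    then have "\<forall>\<^sub>F s in at_left u. g_ext g T s = g_ext g T u"
      by (auto simp: eventually_at_left_field g_ext_def intro!: exI[of _ "u - 1"])
    then show ?thesis
      unfolding continuous_within by (rule tendsto_eventually)
  next
    case 2
    then have "\<forall>\<^sub>F s in at_left u. g_ext g T s = g s"
      by (auto simp: eventually_at_left_field g_ext_def intro!: exI[of _ 0])
    moreover have "(g \<longlongrightarrow> g u) (at_left u)"
      using assms 2 by (auto simp: continuous_within)
    ultimately show ?thesis
      using 2 by (simp add: continuous_within tendsto_cong g_ext_def)
  next
    case 3
    then have "\<forall>\<^sub>F s in at_left u. g_ext g T s = g_ext g T u"
      by (auto simp: eventually_at_left_field g_ext_def intro!: exI[of _ T])
    then show ?thesis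
      unfolding continuous_within by (rule tendsto_eventually)
  qed
qed

lemma emeasure_mu_g_Ico:
  assumes "mono_on {0..T} g" "\<forall>t\<in>{0<..T}. continuous (at_left t) g"
    and "0 \<le> c" "c \<le> d" "d \<le> T"
  shows "emeasure (mu_g g T) {c..<d} = ennreal (g d - g c)"
proof -
  define G where "G s = - g_ext g T (- s)" for s
  have G_mono: "G s \<le> G t" if "s \<le> t" for s t
    unfolding G_def using g_ext_mono[OF assms(1), of "-t" "-s"] assms that by simp
  have G_right_cont: "continuous (at_right s) G" for s
  proof -
    have "(g_ext g T \<longlongrightarrow> g_ext g T (- s)) (at_left (- s))"
      using g_ext_continuous_at_left[OF assms(2)] by (simp add: continuous_within)
    then have "((\<lambda>t. g_ext g T (- t)) \<longlongrightarrow> g_ext g T (- s)) (at_right s)"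
      using at_left_minus[of "- s"] by (simp add: filterlim_filtermap o_def)
    then show ?thesis
      unfolding G_def continuous_within by (intro tendsto_intros) simp
  qed
  have "uminus -` {c..<d} \<inter> space (interval_measure G) = {-d<..-c}"
    by auto
  moreover have "uminus \<in> measurable (interval_measure G) borel"
    by (simp add: measurable_cong_sets[OF sets_interval_measure refl])
  ultimately have "emeasure (mu_g g T) {c..<d} = emeasure (interval_measure G) {-d<..-c}"
    unfolding mu_g_def G_def[abs_def, symmetric] by (subst emeasure_distr) auto
  also have "\<dots> = G (- c) - G (- d)"
    using assms by (intro emeasure_interval_measure_Ioc G_mono G_right_cont) auto
  also have "G (- c) - G (- d) = g d - g c"
    using assms unfolding G_def g_ext_def by simp
  finally show ?thesis .
qed

lemma emeasure_Ioo_le: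
  fixes c d :: real
  assumes "sets M = sets borel" "c < d"
    and Ico_le: "\<And>e. c < e \<Longrightarrow> e < d \<Longrightarrow> emeasure M {e..<d} \<le> B"
  shows "emeasure M {c<..<d} \<le> B"
proof -
  define e where "e n = c + (d - c) / real (n + 2)" for n :: nat
  have e_inner: "c < e n" "e n < d" for n
  proof -
    have "(d - c) / real (n + 2) < (d - c) / 1"
      using \<open>c < d\<close> by (intro divide_strict_left_mono) auto
    then show "c < e n" "e n < d"
      using \<open>c < d\<close> by (simp_all add: e_def)
  qed
  have "incseq (\<lambda>n. {e n..<d})"
  proof (rule incseq_SucI)
    fix n
    have "(d - c) / real (Suc n + 2) \<le> (d - c) / real (n + 2)"
      using assms by (intro divide_left_mono) auto
    then have "e (Suc n) \<le> e n"
      by (simp add: e_def)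
    then show "{e n..<d} \<subseteq> {e (Suc n)..<d}"
      by auto
  qed
  have "(\<Union>n. {e n..<d}) = {c<..<d}"
  proof
    show "(\<Union>n. {e n..<d}) \<subseteq> {c<..<d}"
    proof
      fix s assume "s \<in> (\<Union>n. {e n..<d})"
      then obtain n where "e n \<le> s" "s < d"
        by auto
      then show "s \<in> {c<..<d}"
        using e_inner(1)[of n] by auto
    qed
    show "{c<..<d} \<subseteq> (\<Union>n. {e n..<d})"
    proof
      fix s assume s: "s \<in> {c<..<d}"
      obtain n :: nat where "(d - c) / (s - c) < real n"
        using reals_Archimedean2 by blast
      then have "(d - c) / (s - c) < real (n + 2)"
        by simp
      then have "d - c < real (n + 2) * (s - c)"
        using s by (simp add: divide_less_eq)
      then have "(d - c) / real (n + 2) < s - c"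
        by (subst pos_divide_less_eq) (auto simp: mult.commute)
      then have "e n < s"
        by (simp add: e_def)
      then show "s \<in> (\<Union>n. {e n..<d})"
        using s by (auto intro!: exI[of _ n])
    qed
  qed
  moreover have "(SUP n. emeasure M {e n..<d}) = emeasure M (\<Union>n. {e n..<d})"
  proof (rule SUP_emeasure_incseq[OF _ \<open>incseq (\<lambda>n. {e n..<d})\<close>])
    show "range (\<lambda>n. {e n..<d}) \<subseteq> sets M"
      unfolding assms(1) by auto
  qed
  ultimately have "emeasure M {c<..<d} = (SUP n. emeasure M {e n..<d})"
    by simp
  also have "\<dots> \<le> B"
    using e_inner by (intro SUP_least Ico_le)
  finally show ?thesis .
qed

lemma set_integral_deviation_le:
  fixes f :: "'a \<Rightarrow> real"
  assumes f: "set_integrable M A f" and A: "A \<in> sets M" "emeasure M A \<noteq> \<infinity>"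
    and dev: "\<And>s. s \<in> A \<Longrightarrow> \<bar>f s - c\<bar> \<le> K"
  shows "\<bar>(LINT s:A|M. f s) - c * measure M A\<bar> \<le> K * measure M A"
proof -
  have const: "set_integrable M A (\<lambda>_. r)" for r :: real
    using A unfolding set_integrable_def by (intro integrable_indicator) (auto simp: less_top)
  have int_const: "(LINT s:A|M. r) = r * measure M A" for r
    using set_integral_const[OF A, of r] by simp
  have "(LINT s:A|M. f s - c) \<le> (LINT s:A|M. K)"
    using dev by (intro set_integral_mono set_integral_diff(1) f const) (auto simp: abs_le_iff)
  moreover have "(LINT s:A|M. c - f s) \<le> (LINT s:A|M. K)"
    using dev by (intro set_integral_mono set_integral_diff(1) f const) (auto simp: abs_le_iff)
  moreover have "(LINT s:A|M. f s - c) = (LINT s:A|M. f s) - c * measure M A"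
    using set_integral_diff(2)[OF f const] by (simp add: int_const)
  moreover have "(LINT s:A|M. c - f s) = c * measure M A - (LINT s:A|M. f s)"
    using set_integral_diff(2)[OF const f] by (simp add: int_const)
  ultimately show ?thesis
    by (simp add: int_const abs_le_iff)
qed

lemma abs_diff_le_of_deriv_bound:
  fixes \<phi> :: "real \<Rightarrow> real"
  assumes "\<And>y. \<phi> differentiable (at y)" "\<And>y. \<bar>deriv \<phi> y\<bar> \<le> K"
  shows "\<bar>\<phi> u - \<phi> v\<bar> \<le> K * \<bar>u - v\<bar>"
  using field_differentiable_bound[of UNIV \<phi> "deriv \<phi>" K u v] assms
  by (simp add: DERIV_deriv_iff_real_differentiable)

lemma djump_eq_0_if_isCont: "isCont \<phi> p \<Longrightarrow> djump \<phi> p = 0"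
  unfolding djump_def rlim_def isCont_def filterlim_at_split
  by (simp add: tendsto_Lim[OF trivial_limit_at_right_real])

lemma lipschitz_on_jump_free_interval:
  assumes lip: "lipschitz_const_on {0..T} H (cont_part \<phi>)" and "0 \<le> a" "b \<le> T"
    and cont: "\<And>p. p \<in> {a<..<b} \<Longrightarrow> isCont \<phi> p"
    and "c \<in> {a<..b}" "d \<in> {a<..b}"
  shows "\<bar>\<phi> d - \<phi> c\<bar> \<le> H * \<bar>d - c\<bar>"
proof -
  have jump_part_eq: "jump_part \<phi> s = jump_part \<phi> b" if s: "s \<in> {a<..b}" for s
    unfolding jump_part_def
  proof (rule infsum_cong_neutral)
    fix p assume "p \<in> {0..<b} - {0..<s}"
    then show "djump \<phi> p = 0"
      using s by (intro djump_eq_0_if_isCont cont) auto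
  next
    fix p assume "p \<in> {0..<s} - {0..<b}"
    then show "djump \<phi> p = 0"
      using s by auto
  qed simp
  have "\<bar>cont_part \<phi> d - cont_part \<phi> c\<bar> \<le> H * \<bar>d - c\<bar>"
    using lip assms by (auto simp: lipschitz_const_on_def)
  then show ?thesis
    using jump_part_eq[of c] jump_part_eq[of d] assms by (simp add: cont_part_def)
qed

lemma abs_diff_right_limit_le:
  fixes \<phi> :: "real \<Rightarrow> real"
  assumes lim: "(\<phi> \<longlongrightarrow> m) (at_right a)"
    and lip: "\<And>c d. c \<in> {a<..b} \<Longrightarrow> d \<in> {a<..b} \<Longrightarrow> \<bar>\<phi> d - \<phi> c\<bar> \<le> H * \<bar>d - c\<bar>"
    and s: "s \<in> {a<..b}"
  shows "\<bar>\<phi> s - m\<bar> \<le> H * (s - a)"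
proof (rule tendsto_le[OF trivial_limit_at_right_real])
  show "((\<lambda>t. H * (s - t)) \<longlongrightarrow> H * (s - a)) (at_right a)"
    by (intro tendsto_intros)
  show "((\<lambda>t. \<bar>\<phi> s - \<phi> t\<bar>) \<longlongrightarrow> \<bar>\<phi> s - m\<bar>) (at_right a)"
    by (intro tendsto_intros lim)
  have "\<forall>\<^sub>F t in at_right a. t \<in> {a<..s}"
    using s by (auto simp: eventually_at_right_field intro!: exI[of _ s])
  then show "\<forall>\<^sub>F t in at_right a. \<bar>\<phi> s - \<phi> t\<bar> \<le> H * (s - t)"
  proof eventually_elim
    case (elim t)
    then show ?case
      using lip[of t s] s by auto
  qed
qed

lemma tendsto_at_right_if_linear_bound:
  fixes \<phi> :: "real \<Rightarrow> real"
  assumes "\<forall>\<^sub>F s in at_right a. \<bar>\<phi> s - L\<bar> \<le> C * (s - a)"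
  shows "(\<phi> \<longlongrightarrow> L) (at_right a)"
proof -
  have "((\<lambda>s. C * (s - a)) \<longlongrightarrow> C * (a - a)) (at_right a)"
    by (intro tendsto_intros)
  then have "((\<lambda>s. C * (s - a)) \<longlongrightarrow> 0) (at_right a)"
    by simp
  moreover have "\<forall>\<^sub>F s in at_right a. norm (\<phi> s - L) \<le> C * (s - a)"
    using assms by simp
  ultimately have "((\<lambda>s. \<phi> s - L) \<longlongrightarrow> 0) (at_right a)"
    by (rule Lim_null_comparison[rotated])
  then show ?thesis
    by (simp add: LIM_zero_iff)
qed

definition pc_local_error ::
    "(real \<Rightarrow> real) \<Rightarrow> (real \<Rightarrow> real \<Rightarrow> real) \<Rightarrow> (real \<Rightarrow> real) \<Rightarrow> real \<Rightarrow> real \<Rightarrow> real" where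
  "pc_local_error g f x a b =
     (let xa = rlim x a; fa = fplus f a xa; dg = g b - rlim g a
      in x b - xa - (1/2) * (fa + f b (xa + fa * dg)) * dg)"

lemma pc_tau_eq_local_error:
  "pc_tau g f x T N (Suc k) = pc_local_error g f x (pc_t T N k) (pc_t T N (Suc k))"
  by (simp add: pc_tau_def pc_xstar_def pc_local_error_def Let_def)

locale stieltjes_ivp =
  fixes T x0 H K2 :: real and g x :: "real \<Rightarrow> real" and f :: "real \<Rightarrow> real \<Rightarrow> real"
  assumes T_pos: "0 < T"
    and g_mono: "mono_on {0..T} g"
    and g_left_continuous: "\<forall>t\<in>{0<..T}. continuous (at_left t) g"
    and F_integrable: "set_integrable (mu_g g T) {0..<T} (\<lambda>s. f s (x s))"
    and x_integral_eq: "\<forall>t\<in>{0..T}. x t = x0 + (LINT s:{0..<t}|mu_g g T. f s (x s))"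
    and H_nonneg: "0 \<le> H"
    and F_g_lipschitz: "g_lipschitz_on {0..T} g H (\<lambda>t. f t (x t))"
    and F_cont_part_lipschitz: "lipschitz_const_on {0..T} H (cont_part (\<lambda>t. f t (x t)))"
    and g_cont_part_lipschitz: "lipschitz_const_on {0..T} H (cont_part g)"
    and f_lipschitz: "\<And>t u v. t \<in> {0..T} \<Longrightarrow> \<bar>f t u - f t v\<bar> \<le> K2 * \<bar>u - v\<bar>"
    and f_right_limit: "\<forall>t\<in>{0..<T}. \<forall>c. \<exists>L. ((\<lambda>s. f s c) \<longlongrightarrow> L) (at_right t)"
begin

abbreviation "M \<equiv> mu_g g T"
abbreviation "F \<equiv> \<lambda>t. f t (x t)"

lemma K2_nonneg: "0 \<le> K2"
  using f_lipschitz[of 0 1 0] T_pos by simp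

lemma measure_Ico:
  assumes "0 \<le> c" "c \<le> d" "d \<le> T"
  shows "measure M {c..<d} = g d - g c"
proof -
  have "g c \<le> g d"
    using assms g_mono by (auto intro: mono_onD)
  then show ?thesis
    using emeasure_mu_g_Ico[OF g_mono g_left_continuous assms] by (simp add: measure_def)
qed

lemma emeasure_finite:
  assumes "A \<subseteq> {0..<T}" "A \<in> sets borel"
  shows "emeasure M A \<noteq> \<infinity>"
proof -
  have "emeasure M A \<le> emeasure M {0..<T}"
    using assms by (intro emeasure_mono) auto
  also have "\<dots> = ennreal (g T - g 0)"
    using emeasure_mu_g_Ico[OF g_mono g_left_continuous] T_pos by simp
  finally show ?thesis
    by (auto simp: top_unique)
qed

lemma F_set_integrable: "A \<subseteq> {0..<T} \<Longrightarrow> A \<in> sets borel \<Longrightarrow> set_integrable M A F"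
  using set_integrable_subset[OF F_integrable] by simp

end

locale jump_free_step = stieltjes_ivp +
  fixes a b :: real
  assumes a_nonneg: "0 \<le> a" and a_less_b: "a < b" and b_le_T: "b \<le> T"
    and no_jumps: "Dg g T \<inter> {a<..<b} = {}"
begin

lemma eventually_in_step: "\<forall>\<^sub>F s in at_right a. s \<in> {a<..<b}"
  using a_less_b by (auto simp: eventually_at_right_field intro!: exI[of _ b])

lemma g_isCont:
  assumes p: "p \<in> {a<..<b}"
  shows "isCont g p"
proof -
  have "p \<in> {0<..<T}" "p \<notin> Dg g T"
    using p no_jumps a_nonneg b_le_T by auto
  then show ?thesis
    by (simp add: Dg_def at_within_Icc_at)
qed

lemma F_isCont:
  assumes p: "p \<in> {a<..<b}"
  shows "isCont F p"
proof -
  have p_inner: "p \<in> {0<..<T}"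
    using p a_nonneg b_le_T by auto
  have "norm (F s - F p) \<le> H * \<bar>g s - g p\<bar>" if "s \<in> {0<..<T}" for s
    using F_g_lipschitz that p_inner by (auto simp: g_lipschitz_on_def)
  moreover have "\<forall>\<^sub>F s in at p. s \<in> {0<..<T}"
    using p_inner by (intro eventually_at_in_open') auto
  ultimately have ev: "\<forall>\<^sub>F s in at p. norm (F s - F p) \<le> H * \<bar>g s - g p\<bar>"
    by (auto elim: eventually_mono)
  have "((\<lambda>s. H * \<bar>g s - g p\<bar>) \<longlongrightarrow> H * \<bar>g p - g p\<bar>) (at p)"
    using g_isCont[OF p] unfolding isCont_def by (intro tendsto_intros)
  then have "((\<lambda>s. H * \<bar>g s - g p\<bar>) \<longlongrightarrow> 0) (at p)"
    by simp
  with ev have "((\<lambda>s. F s - F p) \<longlongrightarrow> 0) (at p)"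
    by (rule Lim_null_comparison)
  then show ?thesis
    by (simp add: isCont_def LIM_zero_iff)
qed

lemma g_lipschitz: "c \<in> {a<..b} \<Longrightarrow> d \<in> {a<..b} \<Longrightarrow> \<bar>g d - g c\<bar> \<le> H * \<bar>d - c\<bar>"
  using lipschitz_on_jump_free_interval[OF g_cont_part_lipschitz a_nonneg b_le_T g_isCont] .

lemma F_lipschitz: "c \<in> {a<..b} \<Longrightarrow> d \<in> {a<..b} \<Longrightarrow> \<bar>F d - F c\<bar> \<le> H * \<bar>d - c\<bar>"
  using lipschitz_on_jump_free_interval[OF F_cont_part_lipschitz a_nonneg b_le_T F_isCont] .

lemma emeasure_Ioo_finite: "emeasure M {c<..<d} \<noteq> \<infinity>" if "a \<le> c" "d \<le> b"
  using that a_nonneg b_le_T by (intro emeasure_finite) auto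

lemma measure_Ioo_le:
  assumes "a \<le> c" "c < d" "d \<le> b"
  shows "measure M {c<..<d} \<le> H * (d - c)"
proof -
  have "emeasure M {c<..<d} \<le> ennreal (H * (d - c))"
  proof (rule emeasure_Ioo_le[OF sets_mu_g \<open>c < d\<close>])
    fix e assume e: "c < e" "e < d"
    have "emeasure M {e..<d} = ennreal (g d - g e)"
      using e assms a_nonneg b_le_T by (intro emeasure_mu_g_Ico g_mono g_left_continuous) auto
    also have "g d - g e \<le> H * (d - c)"
      using g_lipschitz[of e d] e assms H_nonneg
      by (smt (verit, best) greaterThanAtMost_iff mult_left_mono)
    finally show "emeasure M {e..<d} \<le> ennreal (H * (d - c))"
      by (simp add: ennreal_leI)
  qed
  then show ?thesis
    using emeasure_Ioo_finite[of c d] assms H_nonneg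
    by (simp add: emeasure_eq_ennreal_measure ennreal_le_iff)
qed

definition x_plus :: real where "x_plus = x0 + (LINT s:{0..a}|M. F s)"

lemma x_minus_x_plus:
  assumes "s \<in> {a<..b}"
  shows "x s - x_plus = (LINT t:{a<..<s}|M. F t)"
proof -
  have "{0..<s} = {0..a} \<union> {a<..<s}"
    using assms a_nonneg by auto
  moreover have "(LINT t:{0..a} \<union> {a<..<s}|M. F t) = (LINT t:{0..a}|M. F t) + (LINT t:{a<..<s}|M. F t)"
    using assms a_less_b b_le_T a_nonneg by (intro set_integral_Un F_set_integrable) auto
  moreover have "x s = x0 + (LINT t:{0..<s}|M. F t)"
    using x_integral_eq assms a_nonneg b_le_T by auto
  ultimately show ?thesis
    by (simp add: x_plus_def)
qed

lemma set_integral_F_deviation_le: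
  assumes "s \<in> {a<..b}" "\<And>t. t \<in> {a<..<s} \<Longrightarrow> \<bar>F t - c\<bar> \<le> K"
  shows "\<bar>(x s - x_plus) - c * measure M {a<..<s}\<bar> \<le> K * measure M {a<..<s}"
  unfolding x_minus_x_plus[OF assms(1)]
  using assms a_nonneg b_le_T emeasure_Ioo_finite[of a s]
  by (intro set_integral_deviation_le F_set_integrable) auto

lemma x_tendsto_x_plus: "(x \<longlongrightarrow> x_plus) (at_right a)"
proof (rule tendsto_at_right_if_linear_bound)
  define B where "B = \<bar>F b\<bar> + H * (b - a)"
  have "\<bar>F t\<bar> \<le> B" if "t \<in> {a<..b}" for t
    using F_lipschitz[of t b] that a_less_b H_nonneg unfolding B_def
    by (smt (verit, best) greaterThanAtMost_iff mult_left_mono)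
  then have bound: "\<bar>x s - x_plus\<bar> \<le> B * (H * (s - a))" if "s \<in> {a<..b}" for s
    using set_integral_F_deviation_le[OF that, of 0 B] measure_Ioo_le[of a s] that
    by (smt (verit) B_def abs_ge_zero greaterThanAtMost_iff greaterThanLessThan_iff mult_left_mono)
  from eventually_in_step show "\<forall>\<^sub>F s in at_right a. \<bar>x s - x_plus\<bar> \<le> B * H * (s - a)"
    by (rule eventually_mono) (use bound in \<open>auto simp: mult.assoc\<close>)
qed

lemma rlim_x: "rlim x a = x_plus"
  unfolding rlim_def by (rule tendsto_Lim[OF trivial_limit_at_right_real x_tendsto_x_plus])

definition Delta :: real where "Delta = measure M {a<..<b}"

lemma g_tendsto: "(g \<longlongrightarrow> g b - Delta) (at_right a)"
proof (rule tendsto_at_right_if_linear_bound)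
  have bound: "\<bar>g s - (g b - Delta)\<bar> \<le> H * (s - a)" if s: "s \<in> {a<..<b}" for s
  proof -
    have "Delta = measure M {a<..<s} + measure M {s..<b}"
    proof -
      have "Delta = measure M ({a<..<s} \<union> {s..<b})"
        unfolding Delta_def using s by (intro arg_cong[where f="measure M"]) auto
      also have "\<dots> = measure M {a<..<s} + measure M {s..<b}"
        using s a_nonneg b_le_T emeasure_Ioo_finite[of a s]
        by (intro measure_Union emeasure_finite) auto
      finally show ?thesis .
    qed
    moreover have "measure M {s..<b} = g b - g s"
      using s a_nonneg b_le_T by (intro measure_Ico) auto
    ultimately show ?thesis
      using measure_Ioo_le[of a s] s by simp
  qed
  from eventually_in_step show "\<forall>\<^sub>F s in at_right a. \<bar>g s - (g b - Delta)\<bar> \<le> H * (s - a)"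
    by (rule eventually_mono) (rule bound)
qed

lemma rlim_g: "g b - rlim g a = Delta"
  unfolding rlim_def using tendsto_Lim[OF trivial_limit_at_right_real g_tendsto] by simp

lemma Delta_nonneg: "0 \<le> Delta"
  by (simp add: Delta_def)

lemma Delta_le: "Delta \<le> H * (b - a)"
  using measure_Ioo_le[of a b] a_less_b by (simp add: Delta_def)

definition F_plus :: real where "F_plus = fplus f a x_plus"

lemma F_tendsto_F_plus: "(F \<longlongrightarrow> F_plus) (at_right a)"
proof -
  have "a \<in> {0..<T}"
    using a_nonneg a_less_b b_le_T by auto
  then obtain L where L: "((\<lambda>s. f s x_plus) \<longlongrightarrow> L) (at_right a)"
    using f_right_limit by blast
  then have "F_plus = L"
    unfolding F_plus_def fplus_def rlim_def by (rule tendsto_Lim[OF trivial_limit_at_right_real])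
  have "norm (F s - f s x_plus) \<le> K2 * \<bar>x s - x_plus\<bar>" if "s \<in> {a<..<b}" for s
    using that a_nonneg b_le_T by (simp add: f_lipschitz)
  then have "\<forall>\<^sub>F s in at_right a. norm (F s - f s x_plus) \<le> K2 * \<bar>x s - x_plus\<bar>"
    using eventually_in_step by (rule eventually_mono[rotated])
  moreover have "((\<lambda>s. K2 * \<bar>x s - x_plus\<bar>) \<longlongrightarrow> K2 * \<bar>x_plus - x_plus\<bar>) (at_right a)"
    by (intro tendsto_intros x_tendsto_x_plus)
  then have "((\<lambda>s. K2 * \<bar>x s - x_plus\<bar>) \<longlongrightarrow> 0) (at_right a)"
    by simp
  ultimately have "((\<lambda>s. F s - f s x_plus) \<longlongrightarrow> 0) (at_right a)"
    by (rule Lim_null_comparison)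
  then have "((\<lambda>s. (F s - f s x_plus) + f s x_plus) \<longlongrightarrow> 0 + L) (at_right a)"
    by (intro tendsto_intros L)
  then show ?thesis
    using \<open>F_plus = L\<close> by simp
qed

lemma F_near_F_plus: "s \<in> {a<..b} \<Longrightarrow> \<bar>F s - F_plus\<bar> \<le> H * (s - a)"
  by (rule abs_diff_right_limit_le[OF F_tendsto_F_plus F_lipschitz])


lemma local_error_bound:
  "\<bar>pc_local_error g f x a b\<bar> \<le> (1/2) * H\<^sup>2 * (b - a)\<^sup>2 + (1/2) * K2 * H ^ 3 * (b - a) ^ 3"
proof -
  define u where "u = H * (b - a)"
  define x_star where "x_star = x_plus + F_plus * Delta"
  have b: "b \<in> {a<..b}"
    using a_less_b by simp
  have error_split: "pc_local_error g f x a b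
      = ((x b - x_plus) - (F_plus + F b) / 2 * Delta) + (1/2) * (F b - f b x_star) * Delta"
    by (simp add: pc_local_error_def Let_def rlim_x rlim_g F_plus_def[symmetric] x_star_def
        algebra_simps)
  have trapezoid: "\<bar>(x b - x_plus) - (F_plus + F b) / 2 * Delta\<bar> \<le> u / 2 * Delta"
    unfolding Delta_def
  proof (rule set_integral_F_deviation_le[OF b])
    fix s assume s: "s \<in> {a<..<b}"
    have "\<bar>F s - F_plus\<bar> \<le> H * (s - a)" "\<bar>F s - F b\<bar> \<le> H * (b - s)"
      using s F_near_F_plus[of s] F_lipschitz[of b s] by auto
    then have "\<bar>F s - (F_plus + F b) / 2\<bar> \<le> (H * (s - a) + H * (b - s)) / 2"
      by (simp add: abs_le_iff field_simps)
    also have "\<dots> = u / 2"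
      by (simp add: u_def algebra_simps)
    finally show "\<bar>F s - (F_plus + F b) / 2\<bar> \<le> u / 2" .
  qed
  have predictor: "\<bar>x b - x_star\<bar> \<le> u * Delta"
  proof -
    have "\<bar>(x b - x_plus) - F_plus * Delta\<bar> \<le> u * Delta"
      unfolding Delta_def
    proof (rule set_integral_F_deviation_le[OF b])
      fix s assume s: "s \<in> {a<..<b}"
      have "H * (s - a) \<le> u"
        using s H_nonneg unfolding u_def by (intro mult_left_mono) auto
      then show "\<bar>F s - F_plus\<bar> \<le> u"
        using s F_near_F_plus[of s] by auto
    qed
    then show ?thesis
      by (simp add: x_star_def algebra_simps)
  qed
  have corrector: "\<bar>F b - f b x_star\<bar> \<le> K2 * (u * Delta)"
    using f_lipschitz[of b "x b" x_star] a_nonneg a_less_b b_le_T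
      mult_left_mono[OF predictor K2_nonneg] by simp
  have D: "0 \<le> Delta" "Delta \<le> u"
    using Delta_nonneg Delta_le by (simp_all add: u_def)
  have "\<bar>(1/2) * (F b - f b x_star) * Delta\<bar> = (1/2) * \<bar>F b - f b x_star\<bar> * Delta"
    using D(1) by (simp add: abs_mult)
  then have "\<bar>pc_local_error g f x a b\<bar> \<le> u / 2 * Delta + (1/2) * (K2 * (u * Delta)) * Delta"
    unfolding error_split using trapezoid mult_right_mono[OF corrector D(1)]
      abs_triangle_ineq[of "(x b - x_plus) - (F_plus + F b) / 2 * Delta" "(1/2) * (F b - f b x_star) * Delta"]
    by linarith
  also have "\<dots> \<le> u / 2 * u + (1/2) * (K2 * u) * (u * u)"
  proof -
    have "u / 2 * Delta \<le> u / 2 * u"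
      using D by (intro mult_left_mono) auto
    moreover have "(K2 * u) * (Delta * Delta) \<le> (K2 * u) * (u * u)"
      using D K2_nonneg by (intro mult_left_mono mult_mono) auto
    ultimately show ?thesis
      by (simp add: algebra_simps)
  qed
  also have "\<dots> = (1/2) * H\<^sup>2 * (b - a)\<^sup>2 + (1/2) * K2 * H ^ 3 * (b - a) ^ 3"
    by (simp add: u_def power2_eq_square power3_eq_cube ac_simps)
  finally show ?thesis .
qed

end

lemma pc_h_pos: "0 < T \<Longrightarrow> 0 < pc_h T N"
  by (simp add: pc_h_def)

lemma pc_t_Suc: "pc_t T N (Suc k) = pc_t T N k + pc_h T N"
  by (simp add: pc_t_def algebra_simps)

lemma pc_t_nonneg: "0 \<le> T \<Longrightarrow> 0 \<le> pc_t T N k"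
  by (simp add: pc_t_def pc_h_def)

lemma pc_t_le:
  assumes "0 \<le> T" "k \<le> Suc N"
  shows "pc_t T N k \<le> T"
proof -
  have "real k * (T / real (Suc N)) \<le> real (Suc N) * (T / real (Suc N))"
    using assms by (intro mult_right_mono) auto
  then show ?thesis
    by (simp add: pc_t_def pc_h_def)
qed

lemma no_node_strictly_between:
  assumes "0 < T" "Dg g T \<subseteq> pc_t T N ` {0..Suc N}"
  shows "Dg g T \<inter> {pc_t T N k<..<pc_t T N (Suc k)} = {}"
proof -
  have "False" if "real k * pc_h T N < real j * pc_h T N" "real j * pc_h T N < real (Suc k) * pc_h T N" for j
  proof -
    have "k < j" "j < Suc k"
      using that pc_h_pos[OF \<open>0 < T\<close>] by (simp_all only: mult_less_cancel_right of_nat_less_iff) auto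
    then show False
      by simp
  qed
  then show ?thesis
    using assms(2) by (fastforce simp: pc_t_def)
qed

lemma linear_plus_quadratic_small:
  fixes A B \<epsilon> :: real
  assumes "0 < \<epsilon>"
  obtains \<delta> where "0 < \<delta>" "\<And>h. 0 < h \<Longrightarrow> h < \<delta> \<Longrightarrow> A * h + B * h\<^sup>2 < \<epsilon>"
proof -
  have "((\<lambda>h. A * h + B * h\<^sup>2) \<longlongrightarrow> A * 0 + B * 0\<^sup>2) (at_right 0)"
    by (intro tendsto_intros)
  then have "\<forall>\<^sub>F h in at_right 0. A * h + B * h\<^sup>2 < \<epsilon>"
    using assms by (intro order_tendstoD(2)) simp_all
  then show ?thesis
    using that by (auto simp: eventually_at_right_field)
qed

context stieltjes_ivp
begin

lemma pc_local_truncation_error_le: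
  assumes nodes: "Dg g T \<subseteq> pc_t T N ` {0..Suc N}" and "k \<le> N"
  shows "\<bar>pc_tau g f x T N (Suc k)\<bar> / pc_h T N
    \<le> (1/2) * H\<^sup>2 * pc_h T N + (1/2) * K2 * H ^ 3 * (pc_h T N)\<^sup>2"
proof -
  define h where "h = pc_h T N"
  have h: "0 < h"
    using T_pos by (simp add: h_def pc_h_pos)
  have "pc_t T N (Suc k) \<le> T"
    using T_pos \<open>k \<le> N\<close> by (intro pc_t_le) auto
  interpret jump_free_step T x0 H K2 g x f "pc_t T N k" "pc_t T N (Suc k)"
    using T_pos no_node_strictly_between[OF T_pos nodes] h \<open>pc_t T N (Suc k) \<le> T\<close>
    by unfold_locales (auto simp: pc_t_Suc h_def pc_t_nonneg)
  have "\<bar>pc_tau g f x T N (Suc k)\<bar> \<le> (1/2) * H\<^sup>2 * h\<^sup>2 + (1/2) * K2 * H ^ 3 * h ^ 3"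
    using local_error_bound by (simp add: pc_tau_eq_local_error pc_t_Suc h_def)
  then have "\<bar>pc_tau g f x T N (Suc k)\<bar> / h \<le> ((1/2) * H\<^sup>2 * h\<^sup>2 + (1/2) * K2 * H ^ 3 * h ^ 3) / h"
    using h by (intro divide_right_mono) auto
  also have "\<dots> = (1/2) * H\<^sup>2 * h + (1/2) * K2 * H ^ 3 * h\<^sup>2"
    using h by (simp add: power2_eq_square power3_eq_cube field_simps)
  finally show ?thesis
    by (simp add: h_def)
qed

lemma pc_consistency_bound:
  assumes "Dg g T \<subseteq> pc_t T N ` {0..Suc N}"
  shows "Max {\<bar>pc_tau g f x T N (n + 1)\<bar> / pc_h T N | n. n \<le> N}
    \<le> (1/2) * H\<^sup>2 * pc_h T N + (1/2) * K2 * H ^ 3 * (pc_h T N)\<^sup>2"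
proof -
  have "{\<bar>pc_tau g f x T N (n + 1)\<bar> / pc_h T N | n. n \<le> N}
      = (\<lambda>n. \<bar>pc_tau g f x T N (Suc n)\<bar> / pc_h T N) ` {..N}"
    by auto
  then show ?thesis
    using pc_local_truncation_error_le[OF assms] by (simp add: Max_le_iff)
qed

end

theorem mainTheorem9:
  fixes T x0 H K2 K3 :: real
    and g x :: "real \<Rightarrow> real"
    and f :: "real \<Rightarrow> real \<Rightarrow> real"
  assumes T_pos: "T > 0"
    and g_nonneg: "\<forall>t\<in>{0..T}. g t \<ge> 0"
    and g_mono: "mono_on {0..T} g"
    and g_leftcont: "\<forall>t\<in>{0<..T}. continuous (at_left t) g"
    and g_cont0: "continuous (at 0 within {0..T}) g"
    and Dg_finite: "finite (Dg g T)"
    and Dg_sub: "Dg g T \<subseteq> {0<..<T}"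
    and x_init: "x 0 = x0"
    and x_ode: "AE t in mu_g g T. t \<in> {0..<T} \<longrightarrow> has_g_deriv x g T t (f t (x t))"
    and x_integrable: "set_integrable (mu_g g T) {0..<T} (\<lambda>s. f s (x s))"
    and x_int_eq: "\<forall>t\<in>{0..T}. x t = x0 + (LINT s:{0..<t}|mu_g g T. f s (x s))"
    (* (H5) *)
    and H_pos: "H > 0"
    and H5a: "g_lipschitz_on {0..T} g H (\<lambda>t. f t (x t))"
    and H5b: "lipschitz_const_on {0..T} H (cont_part (\<lambda>t. f t (x t)))"
    and H5c: "lipschitz_const_on {0..T} H (cont_part g)"
    (* (H6) *)
    and H6: "\<forall>c. (\<exists>M. \<forall>t\<in>{0..T}. \<bar>f t c\<bar> \<le> M) \<and> g_continuous_on {0..T} g (\<lambda>t. f t c)"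
    (* (H7) *)
    and H7a: "\<forall>t\<in>{0..T}. (f t) C1_differentiable_on UNIV"
    and H7b: "\<forall>t\<in>{0..T}. \<forall>y. \<bar>deriv (f t) y\<bar> < K2"
    (* (H8) *)
    and H8a: "\<forall>t\<in>{0..<T}. \<forall>c. \<exists>L. ((\<lambda>s. f s c) \<longlongrightarrow> L) (at_right t)"
    and H8b: "\<forall>t\<in>{0..<T}. (fplus f t) C1_differentiable_on UNIV"
    and H8c: "\<forall>t\<in>{0..<T}. \<forall>y. \<bar>deriv (fplus f t) y\<bar> < K3"
  shows
    "(\<forall>N. Dg g T \<subseteq> pc_t T N ` {0..Suc N} \<longrightarrow>
        Max {\<bar>pc_tau g f x T N (n + 1)\<bar> / pc_h T N | n. n \<le> N}
          \<le> (1/2) * H\<^sup>2 * pc_h T N + (1/2) * K2 * H ^ 3 * (pc_h T N)\<^sup>2)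
     \<and> (\<forall>\<epsilon>>0. \<exists>\<delta>>0. \<forall>N. Dg g T \<subseteq> pc_t T N ` {0..Suc N} \<and> pc_h T N < \<delta> \<longrightarrow>
        Max {\<bar>pc_tau g f x T N (n + 1)\<bar> / pc_h T N | n. n \<le> N} < \<epsilon>)"
proof -
  txt \<open>Only the integral equation, (H5), the Lipschitz bound from (H7) and the existence of the
    right limits in (H8) enter the estimate.\<close>
  have f_lipschitz: "\<bar>f t u - f t v\<bar> \<le> K2 * \<bar>u - v\<bar>" if "t \<in> {0..T}" for t u v
    using H7a H7b that
    by (intro abs_diff_le_of_deriv_bound) (auto simp: C1_differentiable_on_eq less_imp_le)
  interpret stieltjes_ivp T x0 H K2 g x f
    using T_pos g_mono g_leftcont x_integrable x_int_eq H_pos H5a H5b H5c f_lipschitz H8a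
    by unfold_locales auto
  have "\<exists>\<delta>>0. \<forall>N. Dg g T \<subseteq> pc_t T N ` {0..Suc N} \<and> pc_h T N < \<delta> \<longrightarrow>
      Max {\<bar>pc_tau g f x T N (n + 1)\<bar> / pc_h T N | n. n \<le> N} < \<epsilon>" if "0 < \<epsilon>" for \<epsilon>
  proof -
    obtain \<delta> where "0 < \<delta>"
      and small: "\<And>h. 0 < h \<Longrightarrow> h < \<delta> \<Longrightarrow> (1/2) * H\<^sup>2 * h + (1/2) * K2 * H ^ 3 * h\<^sup>2 < \<epsilon>"
      using linear_plus_quadratic_small[OF \<open>0 < \<epsilon>\<close>] by blast
    show ?thesis
    proof (intro exI[of _ \<delta>] conjI allI impI)
      fix N assume N: "Dg g T \<subseteq> pc_t T N ` {0..Suc N} \<and> pc_h T N < \<delta>"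
      then have "Max {\<bar>pc_tau g f x T N (n + 1)\<bar> / pc_h T N | n. n \<le> N}
          \<le> (1/2) * H\<^sup>2 * pc_h T N + (1/2) * K2 * H ^ 3 * (pc_h T N)\<^sup>2"
        by (intro pc_consistency_bound) simp
      also have "\<dots> < \<epsilon>"
        using N by (intro small pc_h_pos T_pos) simp
      finally show "Max {\<bar>pc_tau g f x T N (n + 1)\<bar> / pc_h T N | n. n \<le> N} < \<epsilon>" .
    qed fact
  qed
  then show ?thesis
    using pc_consistency_bound by blast
qed

end
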